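(* Assume $\alpha=\beta$, let $\mathbf U$ with multiplier $\Lambda$ be the similarity profile, and let $\mathbf u$ be a solution of the scaled system with finite initial relative entropy (of the respective order). Then for all $\tau>0$: (i) if $\alpha\ge2$: $\frac{\mathrm d}{\mathrm d\tau}\mathcal E_{\alpha-1}(\mathbf u|\mathbf U)\le-\frac12\mathcal E_{\alpha-1}(\mathbf u|\mathbf U)+e^{-\tau}\int_{\mathbb R}\frac{\Lambda^2}{4kU^\alpha}\mathrm dy$; (ii) if $\alpha=1$: $\frac{\mathrm d}{\mathrm d\tau}\mathcal E_{1/2}(\mathbf u|\mathbf U)\le-\big(\frac12-\tilde\mu_*\big)\mathcal E_{1/2}(\mathbf u|\mathbf U)+e^{-\tau}\int_{\mathbb R}\frac{11+\sqrt2}{14k}\frac{\Lambda^2}{U}\mathrm dy$, where $\tilde\mu_*=\|\Lambda/U\|_{L^\infty}^2/(k\sqrt8)$.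
   Context: Fix $d_1,d_2,k>0$, real stoichiometric coefficients $\alpha,\beta\ge1$ and $A_-,A_+>0$. The similarity profile is a triple $(U,V,\Lambda)$ with $U,V\in\mathrm C^2(\mathbb R)$ positive, bounded and bounded away from $0$, $\Lambda:\mathbb R\to\mathbb R$, satisfying $d_1U''+\tfrac y2U'+\alpha\Lambda=0$, $d_2V''+\tfrac y2V'-\beta\Lambda=0$, $U^\alpha=V^\beta$ on $\mathbb R$, and $U(\pm\infty)=A_\pm^\beta$, $V(\pm\infty)=A_\pm^\alpha$. The scaled system is $u_\tau=d_1u_{yy}+\tfrac y2u_y+e^\tau\alpha k(v^\beta-u^\alpha)$, $v_\tau=d_2v_{yy}+\tfrac y2v_y-e^\tau\beta k(v^\beta-u^\alpha)$ for $\tau>0$, $y\in\mathbb R$, with $(u,v)(\tau,\pm\infty)=(A_\pm^\beta,A_\pm^\alpha)$. A "solution" is a positive classical solution for which the relative entropy is finite and differentiable in $\tau$ with differentiation under the integral allowed, all integrals appearing are finite, and integrations by parts over $\mathbb R$ produce no boundary terms ($\rho,\zeta\to1$ at $\pm\infty$ with sufficient decay). Relative densities $\rho=u/U$, $\zeta=v/V$. Entropy functions: $F_p(z)=\frac{1}{p(p-1)}(z^p-pz+p-1)$ for $p\notin\{0,1\}$, $F_1(z)=z\log z-z+1$. Relative entropy $\mathcal E_p(\mathbf u|\mathbf U)=\int_{\mathbb R}\big(UF_p(\rho)+VF_p(\zeta)\big)\mathrm dy$. $\|\cdot\|_{L^\infty}$ is the supremum of the absolute value. *)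

theory Defs
  imports "HOL-Analysis.Analysis"
begin

text \<open>F_p(z) = (z^p - p z + p - 1)/(p(p-1)) for p not in {0,1}; F_1(z) = z log z - z + 1.
  (The case p = 0 is never used.)\<close>
definition Fp :: "real \<Rightarrow> real \<Rightarrow> real" where
  "Fp p z = (if p = 1 then z * ln z - z + 1
             else (z powr p - p * z + p - 1) / (p * (p - 1)))"

definition rel_entropy ::
  "real \<Rightarrow> (real \<Rightarrow> real) \<Rightarrow> (real \<Rightarrow> real) \<Rightarrow> (real \<Rightarrow> real) \<Rightarrow> (real \<Rightarrow> real) \<Rightarrow> real" where
  "rel_entropy p U V u v =
     (LINT y|lborel. U y * Fp p (u y / U y) + V y * Fp p (v y / V y))"

definition entropy_density ::
  "real \<Rightarrow> (real \<Rightarrow> real) \<Rightarrow> (real \<Rightarrow> real) \<Rightarrow> (real \<Rightarrow> real) \<Rightarrow> (real \<Rightarrow> real) \<Rightarrow> real \<Rightarrow> real" where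
  "entropy_density p U V u v y = U y * Fp p (u y / U y) + V y * Fp p (v y / V y)"

definition C2 :: "(real \<Rightarrow> real) \<Rightarrow> bool" where
  "C2 f \<longleftrightarrow> (\<forall>y. f differentiable (at y)) \<and> (\<forall>y. deriv f differentiable (at y))
            \<and> continuous_on UNIV (deriv (deriv f))"

definition similarity_profile ::
  "real \<Rightarrow> real \<Rightarrow> real \<Rightarrow> real \<Rightarrow> real \<Rightarrow> real \<Rightarrow>
   (real \<Rightarrow> real) \<Rightarrow> (real \<Rightarrow> real) \<Rightarrow> (real \<Rightarrow> real) \<Rightarrow> bool" where
  "similarity_profile d1 d2 \<alpha> \<beta> Am Ap U V \<Lambda> \<longleftrightarrow>
     C2 U \<and> C2 V \<and>
     (\<exists>c C. 0 < c \<and> (\<forall>y. c \<le> U y \<and> U y \<le> C \<and> c \<le> V y \<and> V y \<le> C)) \<and>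
     (\<forall>y. d1 * deriv (deriv U) y + y / 2 * deriv U y + \<alpha> * \<Lambda> y = 0) \<and>
     (\<forall>y. d2 * deriv (deriv V) y + y / 2 * deriv V y - \<beta> * \<Lambda> y = 0) \<and>
     (\<forall>y. U y powr \<alpha> = V y powr \<beta>) \<and>
     (U \<longlongrightarrow> Am powr \<beta>) at_bot \<and> (U \<longlongrightarrow> Ap powr \<beta>) at_top \<and>
     (V \<longlongrightarrow> Am powr \<alpha>) at_bot \<and> (V \<longlongrightarrow> Ap powr \<alpha>) at_top"

definition dtau :: "(real \<Rightarrow> real \<Rightarrow> real) \<Rightarrow> real \<Rightarrow> real \<Rightarrow> real" where
  "dtau w t y = deriv (\<lambda>s. w s y) t"

definition dy :: "(real \<Rightarrow> real \<Rightarrow> real) \<Rightarrow> real \<Rightarrow> real \<Rightarrow> real" where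
  "dy w t y = deriv (\<lambda>z. w t z) y"

definition dyy :: "(real \<Rightarrow> real \<Rightarrow> real) \<Rightarrow> real \<Rightarrow> real \<Rightarrow> real" where
  "dyy w t y = deriv (\<lambda>z. dy w t z) y"

definition classical :: "(real \<Rightarrow> real \<Rightarrow> real) \<Rightarrow> bool" where
  "classical w \<longleftrightarrow>
     (\<forall>t>0. \<forall>y. (\<lambda>s. w s y) differentiable (at t) \<and> (\<lambda>z. w t z) differentiable (at y)
                 \<and> (\<lambda>z. dy w t z) differentiable (at y)) \<and>
     continuous_on ({0<..} \<times> UNIV) (\<lambda>(t, y). w t y) \<and>
     continuous_on ({0<..} \<times> UNIV) (\<lambda>(t, y). dtau w t y) \<and>
     continuous_on ({0<..} \<times> UNIV) (\<lambda>(t, y). dy w t y) \<and>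
     continuous_on ({0<..} \<times> UNIV) (\<lambda>(t, y). dyy w t y)"

text \<open>"Sufficient decay": a function tends to 0 at +-oo faster than any power of |y|.\<close>
definition rapid_decay :: "(real \<Rightarrow> real) \<Rightarrow> bool" where
  "rapid_decay f \<longleftrightarrow>
     (\<forall>n::nat. ((\<lambda>y. \<bar>y\<bar> ^ n * f y) \<longlongrightarrow> 0) at_top \<and>
               ((\<lambda>y. \<bar>y\<bar> ^ n * f y) \<longlongrightarrow> 0) at_bot)"

text \<open>A solution of the scaled system (for the relative entropy of order p):
  a positive classical solution with the boundary conditions, such that the
  relative entropy of order p is finite for tau >= 0, differentiable in tau for
  tau > 0 with differentiation under the integral sign allowed, and such that
  the relative densities rho = u/U, zeta = v/V tend to 1 at +-oo together with
  their first and second y-derivatives with rapid decay (so that integrations by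
  parts over R produce no boundary terms and the integrals appearing are finite).\<close>
definition scaled_solution ::
  "real \<Rightarrow> real \<Rightarrow> real \<Rightarrow> real \<Rightarrow> real \<Rightarrow> real \<Rightarrow> real \<Rightarrow>
   (real \<Rightarrow> real) \<Rightarrow> (real \<Rightarrow> real) \<Rightarrow> real \<Rightarrow>
   (real \<Rightarrow> real \<Rightarrow> real) \<Rightarrow> (real \<Rightarrow> real \<Rightarrow> real) \<Rightarrow> bool" where
  "scaled_solution d1 d2 k \<alpha> \<beta> Am Ap U V p u v \<longleftrightarrow>
     classical u \<and> classical v \<and>
     (\<forall>t\<ge>0. \<forall>y. 0 < u t y \<and> 0 < v t y) \<and>
     (\<forall>t>0. \<forall>y.
        dtau u t y = d1 * dyy u t y + y / 2 * dy u t y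
                     + exp t * \<alpha> * k * (v t y powr \<beta> - u t y powr \<alpha>) \<and>
        dtau v t y = d2 * dyy v t y + y / 2 * dy v t y
                     - exp t * \<beta> * k * (v t y powr \<beta> - u t y powr \<alpha>)) \<and>
     (\<forall>t>0. (u t \<longlongrightarrow> Am powr \<beta>) at_bot \<and> (u t \<longlongrightarrow> Ap powr \<beta>) at_top \<and>
            (v t \<longlongrightarrow> Am powr \<alpha>) at_bot \<and> (v t \<longlongrightarrow> Ap powr \<alpha>) at_top) \<and>
     (\<forall>t\<ge>0. integrable lborel (entropy_density p U V (u t) (v t))) \<and>
     (\<forall>t>0. integrable lborel (\<lambda>y. deriv (\<lambda>s. entropy_density p U V (u s) (v s) y) t) \<and>
            ((\<lambda>s. rel_entropy p U V (u s) (v s)) has_real_derivative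
               (LINT y|lborel. deriv (\<lambda>s. entropy_density p U V (u s) (v s) y) t)) (at t)) \<and>
     (\<forall>t>0.
        rapid_decay (\<lambda>y. u t y / U y - 1) \<and> rapid_decay (\<lambda>y. v t y / V y - 1) \<and>
        rapid_decay (dy (\<lambda>s z. u s z / U z) t) \<and> rapid_decay (dy (\<lambda>s z. v s z / V z) t) \<and>
        rapid_decay (dyy (\<lambda>s z. u s z / U z) t) \<and> rapid_decay (dyy (\<lambda>s z. v s z / V z) t))"

end

theory Submission
  imports Defs "HOL-Probability.Distributions"
begin

text \<open>With \<open>\<alpha> = \<beta>\<close> the profile has \<open>V = U\<close>, and adding the two profile equations gives
  \<open>(d\<^sub>1 + d\<^sub>2) U'' + y U' = 0\<close>: \<open>U'\<close> is a Gaussian and \<open>\<Lambda>\<close> is \<open>y\<close> times a Gaussian.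
  In the relative densities \<open>\<rho> = u/U\<close>, \<open>\<zeta> = v/U\<close> the time derivative of the entropy density is a
  divergence (the entropy flux, which vanishes at \<open>\<plusminus>\<infinity>\<close> by the decay assumptions), minus the
  dissipation \<open>d U F\<^sub>p''(\<rho>) \<rho>'\<^sup>2 \<ge> 0\<close>, minus half the entropy density (the drift \<open>y/2 \<partial>\<^sub>y\<close> of the
  similarity variables), plus the reaction term
  \<open>\<alpha>\<Lambda> (\<zeta>\<^sup>p - \<rho>\<^sup>p)/p + e\<^sup>\<tau> \<alpha>k (v\<^sup>\<alpha> - u\<^sup>\<alpha>) (F\<^sub>p'(\<rho>) - F\<^sub>p'(\<zeta>))\<close>.
  For \<open>p = \<alpha> - 1\<close> a Cauchy--Schwarz inequality makes its second half at most a negative multiple of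
  the square of the first factor, and Young's inequality leaves \<open>e\<^sup>-\<^sup>\<tau> \<Lambda>\<^sup>2/(4kU\<^sup>\<alpha>)\<close>.
  For \<open>\<alpha> = 1\<close>, \<open>p = 1/2\<close> the substitution \<open>\<rho> = a\<^sup>2\<close>, \<open>\<zeta> = b\<^sup>2\<close> reduces it to an explicit
  inequality in \<open>a, b\<close>, part of which is absorbed by the entropy \<open>2U((a-1)\<^sup>2 + (b-1)\<^sup>2)\<close> itself.\<close>

section \<open>Derivatives of the entropy functions\<close>

definition dFp :: "real \<Rightarrow> real \<Rightarrow> real" where
  "dFp p z = (if p = 1 then ln z else (z powr (p - 1) - 1) / (p - 1))"

definition ddFp :: "real \<Rightarrow> real \<Rightarrow> real" where
  "ddFp p z = z powr (p - 2)"

lemma Fp_has_real_derivative: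
  assumes "p \<noteq> 0" "0 < z"
  shows "(Fp p has_real_derivative dFp p z) (at z)"
proof (cases "p = 1")
  case True
  have "((\<lambda>z. z * ln z - z + 1) has_real_derivative ln z) (at z)"
    using assms by (auto intro!: derivative_eq_intros)
  moreover have "Fp p = (\<lambda>z. z * ln z - z + 1)" "dFp p z = ln z"
    using True by (simp_all add: Fp_def[abs_def] dFp_def)
  ultimately show ?thesis by simp
next
  case False
  have "((\<lambda>z. (z powr p - p * z + p - 1) / (p * (p - 1))) has_real_derivative
        (p * z powr (p - 1) - p * 1 + 0 - 0) / (p * (p - 1))) (at z)"
    using assms False by (auto intro!: derivative_eq_intros)
  moreover have "(p * z powr (p - 1) - p * 1 + 0 - 0) / (p * (p - 1)) = dFp p z"
    using False assms by (simp add: dFp_def field_simps)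
  ultimately show ?thesis using False by (simp add: Fp_def[abs_def])
qed

lemma dFp_has_real_derivative:
  assumes "0 < z"
  shows "(dFp p has_real_derivative ddFp p z) (at z)"
proof (cases "p = 1")
  case True
  have "(ln has_real_derivative 1 / z) (at z)" using assms by (auto intro!: derivative_eq_intros)
  moreover have "1 / z = z powr (1 - 2)" using assms by (simp add: powr_minus divide_inverse)
  ultimately show ?thesis using True by (simp add: dFp_def[abs_def] ddFp_def)
next
  case False
  have "((\<lambda>z. (z powr (p - 1) - 1) / (p - 1)) has_real_derivative
        ((p - 1) * z powr (p - 1 - 1) - 0) / (p - 1)) (at z)"
    using assms by (auto intro!: derivative_eq_intros)
  then show ?thesis using False by (simp add: dFp_def[abs_def] ddFp_def)
qed

lemma Fp_chain_rule [derivative_intros]: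
  assumes "p \<noteq> 0" "(f has_real_derivative f') (at x)" "0 < f x"
  shows "((\<lambda>x. Fp p (f x)) has_real_derivative dFp p (f x) * f') (at x)"
  using DERIV_chain2[OF Fp_has_real_derivative[OF assms(1,3)] assms(2)] by simp

lemma dFp_chain_rule [derivative_intros]:
  assumes "(f has_real_derivative f') (at x)" "0 < f x"
  shows "((\<lambda>x. dFp p (f x)) has_real_derivative ddFp p (f x) * f') (at x)"
  using DERIV_chain2[OF dFp_has_real_derivative[OF assms(2)] assms(1)] by simp

lemma ddFp_nonneg: "0 \<le> ddFp p z"
  by (simp add: ddFp_def)

lemma Fp_one [simp]: "Fp p 1 = 0"
  by (simp add: Fp_def)

lemma dFp_one [simp]: "dFp p 1 = 0"
  by (simp add: dFp_def)

lemma Fp_legendre: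
  assumes "p \<noteq> 0" "0 < z"
  shows "z * dFp p z - Fp p z = (z powr p - 1) / p"
proof (cases "p = 1")
  case False
  have "z * dFp p z = (z powr p - z) / (p - 1)"
    using False assms by (simp add: dFp_def powr_mult_base field_simps)
  moreover have "(z powr p - z) / (p - 1) - (z powr p - p * z + p - 1) / (p * (p - 1))
      = (z powr p - 1) / p"
    using False assms by (simp add: divide_simps) (simp add: algebra_simps)
  ultimately show ?thesis
    using False by (simp add: Fp_def)
qed (use assms in \<open>simp add: dFp_def Fp_def\<close>)

section \<open>Pointwise estimates of the reaction term\<close>

lemma powr_quadratic_form_mono:
  fixes l a b \<alpha> :: real
  assumes "\<alpha> \<noteq> 0" "\<alpha> \<noteq> 1" "0 < a" "a \<le> b"
  shows "l\<^sup>2 * a powr \<alpha> / \<alpha> - 2 * l * a powr (\<alpha> - 1) / (\<alpha> - 1) + dFp (\<alpha> - 1) a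
       \<le> l\<^sup>2 * b powr \<alpha> / \<alpha> - 2 * l * b powr (\<alpha> - 1) / (\<alpha> - 1) + dFp (\<alpha> - 1) b"
proof (rule DERIV_nonneg_imp_nondecreasing[OF assms(4)])
  fix x assume "a \<le> x" "x \<le> b"
  then have x: "0 < x" using assms by simp
  have "((\<lambda>x. l\<^sup>2 * x powr \<alpha> / \<alpha> - 2 * l * x powr (\<alpha> - 1) / (\<alpha> - 1) + dFp (\<alpha> - 1) x)
      has_real_derivative
        l\<^sup>2 * (\<alpha> * x powr (\<alpha> - 1)) / \<alpha> - 2 * l * ((\<alpha> - 1) * x powr (\<alpha> - 1 - 1)) / (\<alpha> - 1)
        + ddFp (\<alpha> - 1) x) (at x)"
    using x by (intro DERIV_add DERIV_diff DERIV_cdivide DERIV_cmult has_real_derivative_powr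
        dFp_has_real_derivative)
  moreover have "x powr (\<alpha> - 1) = x powr (\<alpha> - 3) * x\<^sup>2" "x powr (\<alpha> - 1 - 1) = x powr (\<alpha> - 3) * x"
    using x powr_add[of x "\<alpha> - 3" 2] powr_add[of x "\<alpha> - 3" 1] by (simp_all add: powr_numeral)
  then have "l\<^sup>2 * (\<alpha> * x powr (\<alpha> - 1)) / \<alpha> - 2 * l * ((\<alpha> - 1) * x powr (\<alpha> - 1 - 1)) / (\<alpha> - 1)
        + ddFp (\<alpha> - 1) x = x powr (\<alpha> - 3) * (l * x - 1)\<^sup>2"
    using assms by (simp add: ddFp_def power2_eq_square field_simps)
  ultimately show "\<exists>y. ((\<lambda>x. l\<^sup>2 * x powr \<alpha> / \<alpha> - 2 * l * x powr (\<alpha> - 1) / (\<alpha> - 1)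
      + dFp (\<alpha> - 1) x) has_real_derivative y) (at x) \<and> 0 \<le> y"
    by auto
qed

text \<open>Cauchy--Schwarz for \<open>\<integral>\<^sub>a\<^sup>b x\<^bsup>\<alpha>-2\<^esup> = \<integral>\<^sub>a\<^sup>b x\<^bsup>(\<alpha>-1)/2\<^esup> x\<^bsup>(\<alpha>-3)/2\<^esup>\<close>: the quadratic in \<open>l\<close> above
  has derivative \<open>x\<^bsup>\<alpha>-3\<^esup> (l x - 1)\<^sup>2 \<ge> 0\<close>, so its increment over \<open>[a, b]\<close> is nonnegative for every
  \<open>l\<close> and its discriminant is not positive.\<close>
lemma powr_difference_sq_le:
  fixes a b \<alpha> :: real
  assumes "\<alpha> \<noteq> 0" "\<alpha> \<noteq> 1" "0 < a" "0 < b"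
  shows "((b powr (\<alpha> - 1) - a powr (\<alpha> - 1)) / (\<alpha> - 1))\<^sup>2
       \<le> ((b powr \<alpha> - a powr \<alpha>) / \<alpha>) * (dFp (\<alpha> - 1) b - dFp (\<alpha> - 1) a)"
proof -
  have ordered: "((b powr (\<alpha> - 1) - a powr (\<alpha> - 1)) / (\<alpha> - 1))\<^sup>2
       \<le> ((b powr \<alpha> - a powr \<alpha>) / \<alpha>) * (dFp (\<alpha> - 1) b - dFp (\<alpha> - 1) a)"
    if "0 < a" "a < b" for a b
  proof -
    define A where "A = (b powr \<alpha> - a powr \<alpha>) / \<alpha>"
    define B where "B = (b powr (\<alpha> - 1) - a powr (\<alpha> - 1)) / (\<alpha> - 1)"
    define C where "C = dFp (\<alpha> - 1) b - dFp (\<alpha> - 1) a"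
    have "0 < A"
    proof (cases "0 < \<alpha>")
      case True
      then show ?thesis using that by (simp add: A_def powr_less_mono2)
    next
      case False
      then have "b powr \<alpha> < a powr \<alpha>" using that assms by (simp add: powr_less_mono2_neg)
      then show ?thesis using False assms by (simp add: A_def divide_neg_neg)
    qed
    have "0 \<le> l\<^sup>2 * A - 2 * l * B + C" for l
      using powr_quadratic_form_mono[OF assms(1,2) that(1), of b l] that
      by (simp add: A_def B_def C_def diff_divide_distrib algebra_simps)
    from this[of "B / A"] \<open>0 < A\<close> have "B\<^sup>2 \<le> A * C"
      by (simp add: field_simps power2_eq_square)
    then show ?thesis by (simp add: A_def B_def C_def)
  qed
  consider "a < b" | "a = b" | "b < a" by linarith
  then show ?thesis
  proof cases
    case 3
    have "((a powr (\<alpha> - 1) - b powr (\<alpha> - 1)) / (\<alpha> - 1))\<^sup>2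
        = ((b powr (\<alpha> - 1) - a powr (\<alpha> - 1)) / (\<alpha> - 1))\<^sup>2"
      by (simp add: power_divide power2_commute)
    moreover have "(a powr \<alpha> - b powr \<alpha>) / \<alpha> * (dFp (\<alpha> - 1) a - dFp (\<alpha> - 1) b)
        = (b powr \<alpha> - a powr \<alpha>) / \<alpha> * (dFp (\<alpha> - 1) b - dFp (\<alpha> - 1) a)"
      by (simp add: divide_simps algebra_simps)
    ultimately show ?thesis using ordered[of b a] 3 assms by simp
  qed (use ordered assms in simp_all)
qed

lemma linear_minus_quadratic_le:
  fixes c s x :: real
  assumes "0 < s"
  shows "c * x - s * x\<^sup>2 \<le> c\<^sup>2 / (4 * s)"
proof -
  have "c\<^sup>2 / (4 * s) - (c * x - s * x\<^sup>2) = (c - 2 * s * x)\<^sup>2 / (4 * s)"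
    using assms by (simp add: field_simps power2_eq_square)
  moreover have "0 \<le> (c - 2 * s * x)\<^sup>2 / (4 * s)" using assms by simp
  ultimately show ?thesis by simp
qed

definition reaction_entropy_production ::
  "real \<Rightarrow> real \<Rightarrow> real \<Rightarrow> real \<Rightarrow> real \<Rightarrow> real \<Rightarrow> real \<Rightarrow> real \<Rightarrow> real" where
  "reaction_entropy_production \<alpha> k p E L U u v =
     \<alpha> * L * (((v / U) powr p - (u / U) powr p) / p)
     + E * \<alpha> * k * (v powr \<alpha> - u powr \<alpha>) * (dFp p (u / U) - dFp p (v / U))"

lemma reaction_bound_powr:
  fixes \<alpha> k E L U u v :: real
  assumes "\<alpha> \<noteq> 0" "\<alpha> \<noteq> 1" "0 < k" "0 < E" "0 < U" "0 < u" "0 < v"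
  shows "reaction_entropy_production \<alpha> k (\<alpha> - 1) E L U u v \<le> L\<^sup>2 / (4 * k * U powr \<alpha>) / E"
proof -
  define A where "A = ((v / U) powr \<alpha> - (u / U) powr \<alpha>) / \<alpha>"
  define B where "B = ((v / U) powr (\<alpha> - 1) - (u / U) powr (\<alpha> - 1)) / (\<alpha> - 1)"
  define C where "C = dFp (\<alpha> - 1) (v / U) - dFp (\<alpha> - 1) (u / U)"
  define s where "s = E * \<alpha>\<^sup>2 * k * U powr \<alpha>"
  have s: "0 < s" using assms by (simp add: s_def)
  have "B\<^sup>2 \<le> A * C"
    unfolding A_def B_def C_def using assms by (intro powr_difference_sq_le) auto
  have "E * \<alpha> * k * (v powr \<alpha> - u powr \<alpha>) * (dFp (\<alpha> - 1) (u / U) - dFp (\<alpha> - 1) (v / U))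
      = - s * (A * C)"
    using assms by (simp add: A_def C_def s_def powr_divide field_simps power2_eq_square)
  also have "\<dots> \<le> - s * B\<^sup>2" using \<open>B\<^sup>2 \<le> A * C\<close> s by simp
  finally have "\<alpha> * L * B + E * \<alpha> * k * (v powr \<alpha> - u powr \<alpha>) * (dFp (\<alpha> - 1) (u / U) - dFp (\<alpha> - 1) (v / U))
      \<le> (\<alpha> * L) * B - s * B\<^sup>2" by simp
  also have "\<dots> \<le> (\<alpha> * L)\<^sup>2 / (4 * s)" by (rule linear_minus_quadratic_le[OF s])
  also have "\<dots> = L\<^sup>2 / (4 * k * U powr \<alpha>) / E"
    using assms by (simp add: s_def field_simps power2_eq_square)
  finally show ?thesis by (simp add: reaction_entropy_production_def B_def)
qed

lemma Fp_half_square: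
  assumes "0 < x"
  shows "Fp (1/2) (x\<^sup>2) = 2 * (x - 1)\<^sup>2"
proof -
  have "(x\<^sup>2) powr (1/2) = x"
    using assms by (simp add: powr_half_sqrt)
  have "Fp (1/2) (x\<^sup>2) = ((x\<^sup>2) powr (1/2) - 1/2 * x\<^sup>2 + 1/2 - 1) / (1/2 * (1/2 - 1))"
    by (simp add: Fp_def)
  also have "\<dots> = 2 * (x - 1)\<^sup>2"
    unfolding \<open>(x\<^sup>2) powr (1/2) = x\<close> by (simp add: field_simps power2_eq_square)
  finally show ?thesis .
qed

lemma dFp_half_square:
  assumes "0 < x"
  shows "dFp (1/2) (x\<^sup>2) = 2 - 2 / x"
proof -
  have "(x\<^sup>2) powr (1/2) = x"
    using assms by (simp add: powr_half_sqrt)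
  have "(x\<^sup>2) powr (1/2 - 1) = inverse ((x\<^sup>2) powr (1/2))"
    using powr_minus[of "x\<^sup>2" "1/2"] by simp
  also have "\<dots> = 1 / x"
    unfolding \<open>(x\<^sup>2) powr (1/2) = x\<close> by (rule inverse_eq_divide)
  finally have "(x\<^sup>2) powr (1/2 - 1) = 1 / x" .
  have "dFp (1/2) z = (z powr (1/2 - 1) - 1) / (1/2 - 1)" for z
    by (simp add: dFp_def)
  then have "dFp (1/2) (x\<^sup>2) = ((x\<^sup>2) powr (1/2 - 1) - 1) / (1/2 - 1)" .
  also have "\<dots> = 2 - 2 / x"
    unfolding \<open>(x\<^sup>2) powr (1/2 - 1) = 1 / x\<close> using assms by (simp add: field_simps)
  finally show ?thesis .
qed

lemma sum_le_sqrt2_square_dist: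
  fixes a b :: real
  shows "(a + b) / 8 \<le> sqrt 2 * ((a - 1)\<^sup>2 + (b - 1)\<^sup>2) / 2 + (11 + sqrt 2) / 14"
proof -
  have sqrt2: "7/5 \<le> sqrt (2::real)" by (rule real_le_rsqrt) (simp add: power2_eq_square)
  have "0 \<le> (56 * a - 61)\<^sup>2 + (56 * b - 61)\<^sup>2" by simp
  then have "(a + b) / 8 \<le> 7/5 * ((a - 1)\<^sup>2 + (b - 1)\<^sup>2) / 2 + (11 + 7/5) / 14"
    by (simp add: power2_eq_square field_simps)
  moreover have "7/5 * ((a - 1)\<^sup>2 + (b - 1)\<^sup>2) \<le> sqrt 2 * ((a - 1)\<^sup>2 + (b - 1)\<^sup>2)"
    by (intro mult_right_mono sqrt2) simp
  ultimately show ?thesis using sqrt2 by (simp add: field_simps)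
qed

lemma sqrt_reaction_estimate:
  fixes a b k E U w \<mu> :: real
  assumes "0 < a" "0 < b" "0 < k" "0 < U" "1 \<le> E" and \<mu>: "w\<^sup>2 / (2 * sqrt 2 * k) \<le> \<mu>"
  shows "2 * (w * U) * (b - a) - 2 * E * k * U * ((a + b) / (a * b)) * (b - a)\<^sup>2
     \<le> \<mu> * (2 * U * ((a - 1)\<^sup>2 + (b - 1)\<^sup>2)) + (11 + sqrt 2) / (14 * k) * (w\<^sup>2 * U) / E"
proof -
  define Q where "Q = (a - 1)\<^sup>2 + (b - 1)\<^sup>2"
  define c where "c = (a + b) / (a * b)"
  have "0 < c" "0 < E" using assms by (simp_all add: c_def)
  have "4 * (a * b) \<le> (a + b) * (a + b)"
    using sum_squares_ge_zero[of "a - b" 0] by (simp add: algebra_simps power2_eq_square)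
  then have ab: "a * b / (a + b) \<le> (a + b) / 4"
    using assms by (simp add: field_simps)
  have "2 * (w * U) * (b - a) - 2 * E * k * U * c * (b - a)\<^sup>2 \<le> (2 * (w * U))\<^sup>2 / (4 * (2 * E * k * U * c))"
    using \<open>0 < c\<close> \<open>0 < E\<close> assms by (intro linear_minus_quadratic_le) simp
  also have "\<dots> = w\<^sup>2 * U / (2 * E * k) * (1 / c)"
    using \<open>0 < c\<close> \<open>0 < E\<close> assms by (simp add: field_simps power2_eq_square)
  also have "\<dots> = w\<^sup>2 * U / (2 * E * k) * (a * b / (a + b))"
    by (simp add: c_def)
  also have "\<dots> \<le> w\<^sup>2 * U / (E * k) * ((a + b) / 8)"
    using mult_left_mono[OF ab, of "w\<^sup>2 * U / (2 * E * k)"] \<open>0 < E\<close> assms by simp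
  also have "\<dots> \<le> w\<^sup>2 * U / (E * k) * (sqrt 2 * Q / 2 + (11 + sqrt 2) / 14)"
    using \<open>0 < E\<close> assms unfolding Q_def by (intro mult_left_mono sum_le_sqrt2_square_dist) simp
  also have "\<dots> = w\<^sup>2 / (2 * sqrt 2 * k) * (2 * U * Q) / E + (11 + sqrt 2) / (14 * k) * (w\<^sup>2 * U) / E"
    using \<open>0 < E\<close> assms by (simp add: field_simps)
  also have "\<dots> \<le> \<mu> * (2 * U * Q) + (11 + sqrt 2) / (14 * k) * (w\<^sup>2 * U) / E"
  proof -
    have "0 \<le> w\<^sup>2 / (2 * sqrt 2 * k) * (2 * U * Q)"
      using assms by (simp add: Q_def)
    then have "w\<^sup>2 / (2 * sqrt 2 * k) * (2 * U * Q) / E \<le> w\<^sup>2 / (2 * sqrt 2 * k) * (2 * U * Q)"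
      using divide_left_mono[of 1 E] assms by fastforce
    also have "\<dots> \<le> \<mu> * (2 * U * Q)"
      using assms \<mu> by (intro mult_right_mono) (auto simp: Q_def)
    finally show ?thesis by simp
  qed
  finally show ?thesis by (simp add: Q_def c_def)
qed

lemma reaction_bound_sqrt:
  fixes k E L U u v \<mu> :: real
  assumes "0 < k" "1 \<le> E" "0 < U" "0 < u" "0 < v" "(L / U)\<^sup>2 / (2 * sqrt 2 * k) \<le> \<mu>"
  shows "reaction_entropy_production 1 k (1/2) E L U u v
     \<le> \<mu> * (U * Fp (1/2) (u / U) + U * Fp (1/2) (v / U)) + (11 + sqrt 2) / (14 * k) * (L\<^sup>2 / U) / E"
proof -
  define a where "a = sqrt (u / U)"
  define b where "b = sqrt (v / U)"
  have "0 < a" "0 < b" "u / U = a\<^sup>2" "v / U = b\<^sup>2"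
    using assms by (simp_all add: a_def b_def)
  have "u = U * a\<^sup>2" "v = U * b\<^sup>2"
    using \<open>u / U = a\<^sup>2\<close> \<open>v / U = b\<^sup>2\<close> assms by (simp_all add: field_simps)
  have "L * ((b - a) / (1/2)) + E * k * (U * b\<^sup>2 - U * a\<^sup>2) * ((2 - 2 / a) - (2 - 2 / b))
      = 2 * ((L / U) * U) * (b - a) - 2 * E * k * U * ((a + b) / (a * b)) * (b - a)\<^sup>2"
    using \<open>0 < a\<close> \<open>0 < b\<close> assms by (simp add: field_simps power2_eq_square)
  also have "\<dots> \<le> \<mu> * (2 * U * ((a - 1)\<^sup>2 + (b - 1)\<^sup>2))
      + (11 + sqrt 2) / (14 * k) * ((L / U)\<^sup>2 * U) / E"
    using \<open>0 < a\<close> \<open>0 < b\<close> assms by (intro sqrt_reaction_estimate) auto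
  also have "(L / U)\<^sup>2 * U = L\<^sup>2 / U"
    using assms by (simp add: power2_eq_square)
  finally show ?thesis
    using \<open>0 < a\<close> \<open>0 < b\<close> \<open>u / U = a\<^sup>2\<close> \<open>v / U = b\<^sup>2\<close> \<open>u = U * a\<^sup>2\<close> \<open>v = U * b\<^sup>2\<close> assms
    by (simp add: reaction_entropy_production_def Fp_half_square dFp_half_square powr_half_sqrt
        power_divide algebra_simps)
qed

section \<open>Integration by parts and the entropy flux\<close>

lemma tendsto_integral_symmetric_interval:
  fixes f :: "real \<Rightarrow> real"
  assumes "integrable lborel f"
  shows "((\<lambda>R. integral {-R..R} f) \<longlongrightarrow> (LINT y|lborel. f y)) at_top"
proof -
  have "((\<lambda>R. LINT y|lborel. indicator {-R..R} y *\<^sub>R f y) \<longlongrightarrow> (LINT y|lborel. f y)) at_top"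
  proof (rule integral_dominated_convergence_at_top[where w="\<lambda>y. norm (f y)"])
    show "AE y in lborel. ((\<lambda>R. indicator {-R..R} y *\<^sub>R f y) \<longlongrightarrow> f y) at_top"
    proof (rule AE_I2)
      fix y
      have "eventually (\<lambda>R. indicator {-R..R} y *\<^sub>R f y = f y) at_top"
        using eventually_ge_at_top[of "\<bar>y\<bar>"] by eventually_elim (auto simp: indicator_def)
      then show "((\<lambda>R. indicator {-R..R} y *\<^sub>R f y) \<longlongrightarrow> f y) at_top"
        by (rule tendsto_eventually)
    qed
  qed (use assms in \<open>auto simp: indicator_def\<close>)
  moreover have "(LINT y|lborel. indicator {-R..R} y *\<^sub>R f y) = integral {-R..R} f" for R
  proof -
    have "set_integrable lborel {-R..R} f"
      unfolding set_integrable_def by (rule integrable_mult_indicator) (use assms in auto)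
    from set_borel_integral_eq_integral(2)[OF this] show ?thesis
      by (simp add: set_lebesgue_integral_def)
  qed
  ultimately show ?thesis by simp
qed

lemma integral_le_of_le_add_derivative:
  fixes I B G G' :: "real \<Rightarrow> real"
  assumes "integrable lborel I" "integrable lborel B"
    and G: "\<And>y. (G has_real_derivative G' y) (at y)"
    and le: "\<And>y. I y \<le> B y + G' y"
    and top: "(G \<longlongrightarrow> 0) at_top" and bot: "(G \<longlongrightarrow> 0) at_bot"
  shows "(LINT y|lborel. I y) \<le> (LINT y|lborel. B y)"
proof -
  define f where "f y = I y - B y" for y
  have "integrable lborel f" unfolding f_def using assms by auto
  have "integral {-R..R} f \<le> G R - G (-R)" if "0 \<le> R" for R
  proof (rule has_integral_le)
    show "(f has_integral integral {-R..R} f) {-R..R}"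
      using integrable_on_subinterval[OF integrable_on_lborel[OF \<open>integrable lborel f\<close>]]
      by (simp add: has_integral_integral)
    show "(G' has_integral G R - G (-R)) {-R..R}"
      using that G
      by (intro fundamental_theorem_of_calculus)
         (auto simp: has_real_derivative_iff_has_vector_derivative[symmetric] intro: has_field_derivative_at_within)
  qed (use le in \<open>auto simp: f_def algebra_simps\<close>)
  moreover have "((\<lambda>R. G R - G (-R)) \<longlongrightarrow> 0) at_top"
    using tendsto_diff[OF top filterlim_compose[OF bot filterlim_uminus_at_bot_at_top]] by simp
  ultimately have "(LINT y|lborel. f y) \<le> 0"
    by (intro tendsto_le[OF _ _ tendsto_integral_symmetric_interval[OF \<open>integrable lborel f\<close>]])
       (auto intro: eventually_mono[OF eventually_ge_at_top[of 0]])
  then show ?thesis using assms unfolding f_def by simp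
qed

definition entropy_flux :: "real \<Rightarrow> real \<Rightarrow> (real \<Rightarrow> real) \<Rightarrow> (real \<Rightarrow> real) \<Rightarrow> real \<Rightarrow> real" where
  "entropy_flux p d U s y =
     d * (U y * dFp p (s y) * deriv s y + deriv U y * Fp p (s y)) + y / 2 * U y * Fp p (s y)"

text \<open>For \<open>w = U s\<close> the bracket \<open>d w'' + y w'/2\<close> appears in the derivative: the diffusion-drift
  part of the entropy production of \<open>w\<close> is this divergence minus the dissipation
  \<open>d U ddFp p s \<cdot> s'\<^sup>2 \<ge> 0\<close> and half the entropy density.\<close>
lemma entropy_flux_has_real_derivative:
  fixes s U :: "real \<Rightarrow> real"
  assumes p: "p \<noteq> 0" and s_pos: "\<And>z. 0 < s z"
    and s: "\<And>z. (s has_real_derivative deriv s z) (at z)"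
    and ds: "\<And>z. (deriv s has_real_derivative deriv (deriv s) z) (at z)"
    and U: "\<And>z. (U has_real_derivative deriv U z) (at z)"
    and dU: "\<And>z. (deriv U has_real_derivative deriv (deriv U) z) (at z)"
  shows "(entropy_flux p d U s has_real_derivative
      dFp p (s y) * (d * (deriv (deriv U) y * s y + 2 * deriv U y * deriv s y + U y * deriv (deriv s) y)
                     + y / 2 * (deriv U y * s y + U y * deriv s y))
      + d * U y * ddFp p (s y) * (deriv s y)\<^sup>2 + U y * Fp p (s y) / 2
      - (d * deriv (deriv U) y + y / 2 * deriv U y) * (s y * dFp p (s y) - Fp p (s y))) (at y)"
proof -
  have flux1: "((\<lambda>y. U y * dFp p (s y) * deriv s y) has_real_derivative
      U y * dFp p (s y) * deriv (deriv s) y + (U y * (ddFp p (s y) * deriv s y) + deriv U y * dFp p (s y)) * deriv s y) (at y)"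
    by (intro DERIV_mult' U ds dFp_chain_rule s s_pos)
  have flux2: "((\<lambda>y. deriv U y * Fp p (s y)) has_real_derivative
      deriv U y * (dFp p (s y) * deriv s y) + deriv (deriv U) y * Fp p (s y)) (at y)"
    by (intro DERIV_mult' dU Fp_chain_rule p s s_pos)
  have flux3: "((\<lambda>y. y / 2 * U y * Fp p (s y)) has_real_derivative
      y / 2 * U y * (dFp p (s y) * deriv s y) + (y / 2 * deriv U y + 1 / 2 * U y) * Fp p (s y)) (at y)"
    by (intro DERIV_mult' DERIV_cdivide DERIV_ident U Fp_chain_rule p s s_pos)
  show ?thesis
    unfolding entropy_flux_def[abs_def]
    by (rule DERIV_cong[OF DERIV_add[OF DERIV_cmult[OF DERIV_add[OF flux1 flux2]] flux3]])
       (simp add: power2_eq_square algebra_simps)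
qed

lemma tendsto_bounded_mult_zero:
  fixes f g :: "'a \<Rightarrow> real"
  assumes "(f \<longlongrightarrow> 0) F" "\<And>x. \<bar>g x\<bar> \<le> M"
  shows "((\<lambda>x. g x * f x) \<longlongrightarrow> 0) F"
proof (rule tendsto_0_le[OF assms(1), where K = M])
  show "\<forall>\<^sub>F x in F. norm (g x * f x) \<le> norm (f x) * M"
    using mult_right_mono[OF assms(2) abs_ge_zero] by (simp add: abs_mult mult.commute)
qed

lemma isCont_Fp_quotient:
  assumes "p \<noteq> 0"
  shows "isCont (\<lambda>z. Fp p z / (z - 1)) 1"
proof -
  have "((\<lambda>z. (Fp p z - Fp p 1) / (z - 1)) \<longlongrightarrow> dFp p 1) (at 1)"
    using Fp_has_real_derivative[OF assms, of 1] by (simp add: has_field_derivative_iff)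
  then show ?thesis by (simp add: isCont_def)
qed

lemma entropy_flux_tendsto_zero:
  fixes s U :: "real \<Rightarrow> real"
  assumes p: "p \<noteq> 0"
    and s: "((\<lambda>y. s y - 1) \<longlongrightarrow> 0) F" "(deriv s \<longlongrightarrow> 0) F" "((\<lambda>y. y * (s y - 1)) \<longlongrightarrow> 0) F"
    and U: "\<And>y. \<bar>U y\<bar> \<le> M" "\<And>y. \<bar>deriv U y\<bar> \<le> M"
  shows "(entropy_flux p d U s \<longlongrightarrow> 0) F"
proof -
  have "(s \<longlongrightarrow> 1) F" using s(1) by (simp add: LIM_zero_iff)
  have dFp_s: "((\<lambda>y. dFp p (s y)) \<longlongrightarrow> 0) F"
    using isCont_tendsto_compose[OF DERIV_isCont[OF dFp_has_real_derivative] \<open>(s \<longlongrightarrow> 1) F\<close>] by simp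
  have Fp_s: "((\<lambda>y. Fp p (s y)) \<longlongrightarrow> 0) F"
    using isCont_tendsto_compose[OF DERIV_isCont[OF Fp_has_real_derivative[OF p]] \<open>(s \<longlongrightarrow> 1) F\<close>] by simp
  have quotient_s: "((\<lambda>y. Fp p (s y) / (s y - 1)) \<longlongrightarrow> 0) F"
    using isCont_tendsto_compose[OF isCont_Fp_quotient[OF p] \<open>(s \<longlongrightarrow> 1) F\<close>] by simp
  have "((\<lambda>y. U y * (dFp p (s y) * deriv s y)) \<longlongrightarrow> 0) F"
    by (rule tendsto_bounded_mult_zero[OF tendsto_mult_zero[OF dFp_s s(2)] U(1)])
  moreover have "((\<lambda>y. deriv U y * Fp p (s y)) \<longlongrightarrow> 0) F"
    by (rule tendsto_bounded_mult_zero[OF Fp_s U(2)])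
  moreover have "((\<lambda>y. U y * (y * (s y - 1) * (Fp p (s y) / (s y - 1)) / 2)) \<longlongrightarrow> 0) F"
    by (rule tendsto_bounded_mult_zero[OF tendsto_divide_zero[OF tendsto_mult_zero[OF s(3) quotient_s]] U(1)])
  ultimately have "((\<lambda>y. d * (U y * (dFp p (s y) * deriv s y) + deriv U y * Fp p (s y))
      + U y * (y * (s y - 1) * (Fp p (s y) / (s y - 1)) / 2)) \<longlongrightarrow> d * (0 + 0) + 0) F"
    by (intro tendsto_intros)
  moreover have "d * (U y * (dFp p (s y) * deriv s y) + deriv U y * Fp p (s y))
      + U y * (y * (s y - 1) * (Fp p (s y) / (s y - 1)) / 2) = entropy_flux p d U s y" for y
  proof -
    have "U y * (y * (s y - 1) * (Fp p (s y) / (s y - 1)) / 2) = y / 2 * U y * Fp p (s y)"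
      by (cases "s y = 1") auto
    then show ?thesis by (simp only: entropy_flux_def mult.assoc)
  qed
  ultimately show ?thesis by simp
qed

lemma relative_density_derivatives:
  fixes f U :: "real \<Rightarrow> real"
  assumes f: "\<And>z. (f has_real_derivative deriv f z) (at z)" "\<And>z. deriv f differentiable (at z)"
    and U: "\<And>z. (U has_real_derivative deriv U z) (at z)"
      "\<And>z. (deriv U has_real_derivative deriv (deriv U) z) (at z)"
    and U_pos: "\<And>z. 0 < U z"
  defines "r \<equiv> \<lambda>z. f z / U z"
  shows "(r has_real_derivative deriv r y) (at y)"
    and "(deriv r has_real_derivative deriv (deriv r) y) (at y)"
    and "deriv f y = deriv U y * r y + U y * deriv r y"
    and "deriv (deriv f) y = deriv (deriv U) y * r y + 2 * deriv U y * deriv r y + U y * deriv (deriv r) y"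
proof -
  have U_nz: "U z \<noteq> 0" for z using U_pos[of z] by simp
  have r': "(r has_real_derivative (deriv f z * U z - f z * deriv U z) / (U z * U z)) (at z)" for z
    unfolding r_def by (rule DERIV_divide[OF f(1) U(1) U_nz])
  then have dr: "deriv r = (\<lambda>z. (deriv f z * U z - f z * deriv U z) / (U z * U z))"
    by (intro ext DERIV_imp_deriv)
  with r' have r: "(r has_real_derivative deriv r z) (at z)" for z by simp
  then show "(r has_real_derivative deriv r y) (at y)" by blast
  have df: "(deriv f has_real_derivative deriv (deriv f) z) (at z)" for z
    using f(2) by (simp add: DERIV_deriv_iff_real_differentiable)
  have "\<exists>D. ((\<lambda>z. (deriv f z * U z - f z * deriv U z) / (U z * U z)) has_real_derivative D) (at z)" for z
    using DERIV_divide[OF DERIV_diff[OF DERIV_mult'[OF df U(1)] DERIV_mult'[OF f(1) U(2)]]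
        DERIV_mult'[OF U(1) U(1)], of z] U_nz[of z] by auto
  then have dr': "(deriv r has_real_derivative deriv (deriv r) z) (at z)" for z
    unfolding dr by (meson DERIV_deriv_iff_real_differentiable real_differentiable_def)
  then show "(deriv r has_real_derivative deriv (deriv r) y) (at y)" .
  have "deriv f z = deriv U z * r z + U z * deriv r z" for z
    using U_nz[of z] by (simp add: dr r_def[symmetric] field_simps) (simp add: r_def)
  then have f_eq: "deriv f = (\<lambda>z. deriv U z * r z + U z * deriv r z)" by blast
  then show "deriv f y = deriv U y * r y + U y * deriv r y" by simp
  have "((\<lambda>z. deriv U z * r z + U z * deriv r z) has_real_derivative
       (deriv U y * deriv r y + deriv (deriv U) y * r y) + (U y * deriv (deriv r) y + deriv U y * deriv r y)) (at y)"
    by (intro DERIV_add DERIV_mult' U r dr')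
  then show "deriv (deriv f) y = deriv (deriv U) y * r y + 2 * deriv U y * deriv r y + U y * deriv (deriv r) y"
    unfolding f_eq by (simp add: DERIV_imp_deriv algebra_simps)
qed

text \<open>The qualified name \<open>Defs.entropy_density\<close> avoids the clash with \<open>entropy_density\<close> of
  HOL-Probability.\<close>
lemma entropy_density_time_derivative:
  assumes "p \<noteq> 0" "0 < U y" "0 < u t y" "0 < v t y"
    and "(\<lambda>s. u s y) differentiable (at t)" "(\<lambda>s. v s y) differentiable (at t)"
  shows "deriv (\<lambda>s. Defs.entropy_density p U U (u s) (v s) y) t
       = dFp p (u t y / U y) * dtau u t y + dFp p (v t y / U y) * dtau v t y"
proof -
  have "((\<lambda>s. u s y) has_real_derivative dtau u t y) (at t)"
    "((\<lambda>s. v s y) has_real_derivative dtau v t y) (at t)"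
    using assms(5,6) by (simp_all add: dtau_def DERIV_deriv_iff_real_differentiable)
  then have "((\<lambda>s. Defs.entropy_density p U U (u s) (v s) y) has_real_derivative
      U y * (dFp p (u t y / U y) * (dtau u t y / U y)) + U y * (dFp p (v t y / U y) * (dtau v t y / U y))) (at t)"
    unfolding Defs.entropy_density_def using assms(1-4)
    by (intro DERIV_add DERIV_cmult Fp_chain_rule DERIV_cdivide) auto
  then show ?thesis using assms(2) by (simp add: DERIV_imp_deriv)
qed

lemma rapid_decay_tendsto:
  assumes "rapid_decay f"
  shows "(f \<longlongrightarrow> 0) at_top" "(f \<longlongrightarrow> 0) at_bot"
    and "((\<lambda>y. y * f y) \<longlongrightarrow> 0) at_top" "((\<lambda>y. y * f y) \<longlongrightarrow> 0) at_bot"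
proof -
  have "((\<lambda>y. \<bar>y\<bar> ^ n * f y) \<longlongrightarrow> 0) F" if "F = at_top \<or> F = at_bot" for n F
    using assms that unfolding rapid_decay_def by auto
  from this[of _ 0] this[of _ 1] show "(f \<longlongrightarrow> 0) at_top" "(f \<longlongrightarrow> 0) at_bot"
    "((\<lambda>y. y * f y) \<longlongrightarrow> 0) at_top" "((\<lambda>y. y * f y) \<longlongrightarrow> 0) at_bot"
    by (auto simp: tendsto_rabs_zero_iff[symmetric, of "\<lambda>y. y * f y"] abs_mult
        tendsto_rabs_zero_iff[symmetric, of "\<lambda>y. \<bar>y\<bar> * f y"])
qed

section \<open>The similarity profile for equal coefficients\<close>

lemma abs_mult_exp_neg_square_le:
  fixes D y :: real
  assumes "0 < D"
  shows "\<bar>y\<bar> * exp (- (y\<^sup>2) / (2 * D)) \<le> 1 + 2 * D"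
proof -
  define t where "t = y\<^sup>2 / (2 * D)"
  have "0 \<le> t" using assms by (simp add: t_def)
  have "t \<le> exp t" using exp_ge_add_one_self[of t] by linarith
  then have "t * exp (- t) \<le> 1" by (simp add: exp_minus field_simps)
  then have "y\<^sup>2 * exp (- t) \<le> 2 * D" using assms by (simp add: t_def field_simps)
  moreover have "\<bar>y\<bar> \<le> 1 + y\<^sup>2"
  proof (cases "\<bar>y\<bar> \<le> 1")
    case False
    then have "\<bar>y\<bar> * 1 \<le> \<bar>y\<bar> * \<bar>y\<bar>" by (intro mult_left_mono) auto
    then show ?thesis by (simp add: power2_eq_square abs_mult_self_eq)
  qed (simp add: add_increasing2)
  then have "\<bar>y\<bar> * exp (- t) \<le> exp (- t) + y\<^sup>2 * exp (- t)"
    using mult_right_mono[of "\<bar>y\<bar>" "1 + y\<^sup>2" "exp (- t)"] by (simp add: algebra_simps)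
  moreover have "exp (- t) \<le> 1" using \<open>0 \<le> t\<close> by simp
  ultimately have "\<bar>y\<bar> * exp (- t) \<le> 1 + 2 * D" by linarith
  then show ?thesis unfolding t_def minus_divide_left .
qed

locale equal_coefficient_profile =
  fixes d1 d2 \<alpha> Am Ap :: real and U V \<Lambda> :: "real \<Rightarrow> real"
  assumes d1_pos: "0 < d1" and d2_pos: "0 < d2" and \<alpha>_pos: "0 < \<alpha>"
    and profile: "similarity_profile d1 d2 \<alpha> \<alpha> Am Ap U V \<Lambda>"
begin

lemma \<alpha>_nonzero: "\<alpha> \<noteq> 0"
  using \<alpha>_pos by simp

lemma profile_bounds: "\<exists>c C. 0 < c \<and> (\<forall>y. c \<le> U y \<and> U y \<le> C \<and> c \<le> V y \<and> V y \<le> C)"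
  using profile unfolding similarity_profile_def by blast

lemma U_pos: "0 < U y"
  using profile_bounds by (meson less_le_trans)

lemma V_eq_U: "V = U"
proof
  fix y
  have "U y powr \<alpha> = V y powr \<alpha>" using profile unfolding similarity_profile_def by blast
  then have "(U y powr \<alpha>) powr (1 / \<alpha>) = (V y powr \<alpha>) powr (1 / \<alpha>)" by simp
  moreover have "0 < V y" using profile_bounds by (meson less_le_trans)
  ultimately show "V y = U y" using \<alpha>_nonzero U_pos[of y] by (simp add: powr_powr)
qed

lemma U_has_real_derivative: "(U has_real_derivative deriv U y) (at y)"
  and dU_has_real_derivative: "(deriv U has_real_derivative deriv (deriv U) y) (at y)"
  and continuous_ddU: "continuous_on UNIV (deriv (deriv U))"
  using profile unfolding similarity_profile_def C2_def
  by (simp_all add: DERIV_deriv_iff_real_differentiable)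

lemma profile_equation_u: "d1 * deriv (deriv U) y + y / 2 * deriv U y = - \<alpha> * \<Lambda> y"
proof -
  have "d1 * deriv (deriv U) y + y / 2 * deriv U y + \<alpha> * \<Lambda> y = 0"
    using profile unfolding similarity_profile_def by blast
  then show ?thesis by linarith
qed

lemma profile_equation_v: "d2 * deriv (deriv U) y + y / 2 * deriv U y = \<alpha> * \<Lambda> y"
proof -
  have "d2 * deriv (deriv V) y + y / 2 * deriv V y - \<alpha> * \<Lambda> y = 0"
    using profile unfolding similarity_profile_def by blast
  then show ?thesis unfolding V_eq_U by linarith
qed

lemma multiplier_eq: "\<Lambda> y = (d2 - d1) * deriv (deriv U) y / (2 * \<alpha>)"
  using profile_equation_u[of y] profile_equation_v[of y] \<alpha>_nonzero by (simp add: field_simps)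

lemma dU_gaussian: "deriv U y = deriv U 0 * exp (- (y\<^sup>2) / (2 * (d1 + d2)))"
proof -
  define D where "D = d1 + d2"
  have "0 < D" using d1_pos d2_pos by (simp add: D_def)
  define g where "g y = deriv U y * exp (y\<^sup>2 / (2 * D))" for y
  have "(g has_real_derivative 0) (at x)" for x
  proof -
    have "D * deriv (deriv U) x + x * deriv U x = 0"
      using profile_equation_u[of x] profile_equation_v[of x] by (simp add: D_def algebra_simps)
    moreover have "((\<lambda>x. deriv U x * exp (x\<^sup>2 / (2 * D))) has_real_derivative
        exp (x\<^sup>2 / (2 * D)) / D * (D * deriv (deriv U) x + x * deriv U x)) (at x)"
      using \<open>0 < D\<close>
      by (auto intro!: derivative_eq_intros dU_has_real_derivative simp: field_simps)
    ultimately show ?thesis by (simp add: g_def[abs_def])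
  qed
  then have "g y = g 0" using DERIV_isconst_all by blast
  then show ?thesis by (simp add: g_def D_def exp_minus field_simps)
qed

lemma multiplier_gaussian:
  "\<Lambda> y = - ((d2 - d1) * deriv U 0 / (2 * \<alpha> * (d1 + d2))) * (y * exp (- (y\<^sup>2) / (2 * (d1 + d2))))"
proof -
  have "(d1 + d2) * deriv (deriv U) y = - y * deriv U y"
    using profile_equation_u[of y] profile_equation_v[of y] by (simp add: algebra_simps)
  then have ddU: "deriv (deriv U) y = - (y / (d1 + d2)) * deriv U 0 * exp (- (y\<^sup>2) / (2 * (d1 + d2)))"
    using d1_pos d2_pos by (simp add: dU_gaussian[of y] field_simps)
  show ?thesis
    using \<alpha>_nonzero d1_pos d2_pos unfolding multiplier_eq ddU by (simp add: field_simps)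
qed

lemma multiplier_bounded: "\<exists>M. \<forall>y. \<bar>\<Lambda> y\<bar> \<le> M"
proof -
  define c where "c = \<bar>(d2 - d1) * deriv U 0 / (2 * \<alpha> * (d1 + d2))\<bar>"
  have "\<bar>\<Lambda> y\<bar> = c * (\<bar>y\<bar> * exp (- (y\<^sup>2) / (2 * (d1 + d2))))" for y
    by (simp add: multiplier_gaussian c_def abs_mult)
  also have "\<dots> y \<le> c * (1 + 2 * (d1 + d2))" for y
    using d1_pos d2_pos by (intro mult_left_mono abs_mult_exp_neg_square_le) (auto simp: c_def)
  finally show ?thesis by blast
qed

lemma dU_bounded: "\<bar>deriv U y\<bar> \<le> \<bar>deriv U 0\<bar>"
proof -
  have "exp (- (y\<^sup>2) / (2 * (d1 + d2))) \<le> 1" using d1_pos d2_pos by simp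
  then show ?thesis by (simp add: dU_gaussian[of y] abs_mult mult_left_le)
qed

lemma multiplier_square_normal_moment:
  "\<Lambda> y ^ 2 = ((d2 - d1) * deriv U 0 / (2 * \<alpha> * (d1 + d2)))\<^sup>2 * sqrt (pi * (d1 + d2))
      * (normal_density 0 (sqrt ((d1 + d2) / 2)) y * (y - 0) ^ 2)"
proof -
  define D where "D = d1 + d2"
  have "0 < D" using d1_pos d2_pos by (simp add: D_def)
  have "(exp (- (y\<^sup>2) / (2 * D)))\<^sup>2 = exp (- (y\<^sup>2) / D)"
    by (simp add: power2_eq_square exp_add[symmetric])
  then have "\<Lambda> y ^ 2 = ((d2 - d1) * deriv U 0 / (2 * \<alpha> * D))\<^sup>2 * y\<^sup>2 * exp (- (y\<^sup>2) / D)"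
    unfolding multiplier_gaussian D_def[symmetric]
    by (simp only: power_mult_distrib power2_minus mult.assoc)
  moreover have "normal_density 0 (sqrt (D / 2)) y = exp (- (y\<^sup>2) / D) / sqrt (pi * D)"
    using \<open>0 < D\<close> by (simp add: normal_density_def power2_eq_square real_sqrt_mult)
  ultimately show ?thesis
    using \<open>0 < D\<close> by (simp add: D_def[symmetric])
qed

lemma continuous_on_multiplier: "continuous_on UNIV \<Lambda>"
proof -
  have "\<Lambda> = (\<lambda>y. (d2 - d1) * deriv (deriv U) y / (2 * \<alpha>))" using multiplier_eq by auto
  then show ?thesis using continuous_ddU \<alpha>_nonzero by (auto intro!: continuous_intros)
qed

lemma integrable_multiplier_square:
  assumes "0 \<le> s"
  shows "integrable lborel (\<lambda>y. \<Lambda> y ^ 2 / U y powr s)"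
proof -
  obtain c where c: "0 < c" "\<And>y. c \<le> U y" using profile_bounds by blast
  define K where "K = ((d2 - d1) * deriv U 0 / (2 * \<alpha> * (d1 + d2)))\<^sup>2 * sqrt (pi * (d1 + d2))"
  define f where "f y = K / c powr s * (normal_density 0 (sqrt ((d1 + d2) / 2)) y * (y - 0) ^ 2)" for y
  have int: "integrable lborel f"
    unfolding f_def using d1_pos d2_pos by (intro integrable_mult_right integrable_normal_moment) auto
  have cont: "continuous_on UNIV (\<lambda>y. \<Lambda> y ^ 2 / U y powr s)"
    using continuous_on_multiplier U_has_real_derivative U_pos
    by (intro continuous_intros) (auto intro: continuous_at_imp_continuous_on DERIV_isCont
        simp: less_imp_neq[symmetric])
  have dominated: "norm (\<Lambda> y ^ 2 / U y powr s) \<le> norm (f y)" for y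
  proof -
    have "\<Lambda> y ^ 2 / U y powr s \<le> \<Lambda> y ^ 2 / c powr s"
      using c assms U_pos[of y] by (intro divide_left_mono powr_mono2) auto
    also have "\<dots> = f y"
      unfolding f_def K_def multiplier_square_normal_moment[of y] by simp
    finally show ?thesis using U_pos[of y] by simp
  qed
  show ?thesis
    using cont by (intro Bochner_Integration.integrable_bound[OF int _ AE_I2[OF dominated]])
      (simp add: borel_measurable_continuous_onI)
qed

section \<open>Entropy dissipation\<close>

context
  fixes k p t :: real and u v :: "real \<Rightarrow> real \<Rightarrow> real"
  assumes solution: "scaled_solution d1 d2 k \<alpha> \<alpha> Am Ap U V p u v"
    and p_nonzero: "p \<noteq> 0" and t_pos: "0 < t"
begin

abbreviation (input) \<rho> :: "real \<Rightarrow> real" where "\<rho> \<equiv> \<lambda>y. u t y / U y"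
abbreviation (input) \<zeta> :: "real \<Rightarrow> real" where "\<zeta> \<equiv> \<lambda>y. v t y / U y"

lemma solution_pos: "0 < u t y" "0 < v t y"
  using solution t_pos unfolding scaled_solution_def by auto

lemma relative_densities_pos: "0 < \<rho> y" "0 < \<zeta> y"
  using solution_pos U_pos by auto

lemma relative_densities_derivatives:
  shows "(\<rho> has_real_derivative deriv \<rho> y) (at y)" "(deriv \<rho> has_real_derivative deriv (deriv \<rho>) y) (at y)"
    and "(\<zeta> has_real_derivative deriv \<zeta> y) (at y)" "(deriv \<zeta> has_real_derivative deriv (deriv \<zeta>) y) (at y)"
    and "dy u t y = deriv U y * \<rho> y + U y * deriv \<rho> y"
    and "dyy u t y = deriv (deriv U) y * \<rho> y + 2 * deriv U y * deriv \<rho> y + U y * deriv (deriv \<rho>) y"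
    and "dy v t y = deriv U y * \<zeta> y + U y * deriv \<zeta> y"
    and "dyy v t y = deriv (deriv U) y * \<zeta> y + 2 * deriv U y * deriv \<zeta> y + U y * deriv (deriv \<zeta>) y"
proof -
  have dy_eq: "dy w t = deriv (w t)" and dyy_eq: "dyy w t y = deriv (deriv (w t)) y"
    for w :: "real \<Rightarrow> real \<Rightarrow> real"
    by (simp_all add: dy_def[abs_def] dyy_def)
  have "classical u" "classical v" using solution unfolding scaled_solution_def by blast+
  then have "(u t has_real_derivative deriv (u t) z) (at z)" "deriv (u t) differentiable (at z)"
    "(v t has_real_derivative deriv (v t) z) (at z)" "deriv (v t) differentiable (at z)" for z
    using t_pos unfolding classical_def dy_def by (auto simp: DERIV_deriv_iff_real_differentiable)
  from relative_density_derivatives[OF this(1,2) U_has_real_derivative dU_has_real_derivative U_pos]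
    relative_density_derivatives[OF this(3,4) U_has_real_derivative dU_has_real_derivative U_pos]
  show "(\<rho> has_real_derivative deriv \<rho> y) (at y)" "(deriv \<rho> has_real_derivative deriv (deriv \<rho>) y) (at y)"
    "(\<zeta> has_real_derivative deriv \<zeta> y) (at y)" "(deriv \<zeta> has_real_derivative deriv (deriv \<zeta>) y) (at y)"
    "dy u t y = deriv U y * \<rho> y + U y * deriv \<rho> y"
    "dyy u t y = deriv (deriv U) y * \<rho> y + 2 * deriv U y * deriv \<rho> y + U y * deriv (deriv \<rho>) y"
    "dy v t y = deriv U y * \<zeta> y + U y * deriv \<zeta> y"
    "dyy v t y = deriv (deriv U) y * \<zeta> y + 2 * deriv U y * deriv \<zeta> y + U y * deriv (deriv \<zeta>) y"
    unfolding dy_eq dyy_eq by blast+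
qed

lemma total_flux_has_real_derivative:
  "((\<lambda>y. entropy_flux p d1 U \<rho> y + entropy_flux p d2 U \<zeta> y) has_real_derivative
     dFp p (\<rho> y) * (d1 * dyy u t y + y / 2 * dy u t y)
       + d1 * U y * ddFp p (\<rho> y) * (deriv \<rho> y)\<^sup>2 + U y * Fp p (\<rho> y) / 2
       + \<alpha> * \<Lambda> y * (\<rho> y * dFp p (\<rho> y) - Fp p (\<rho> y))
     + (dFp p (\<zeta> y) * (d2 * dyy v t y + y / 2 * dy v t y)
       + d2 * U y * ddFp p (\<zeta> y) * (deriv \<zeta> y)\<^sup>2 + U y * Fp p (\<zeta> y) / 2
       - \<alpha> * \<Lambda> y * (\<zeta> y * dFp p (\<zeta> y) - Fp p (\<zeta> y)))) (at y)"
proof -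
  note flux = entropy_flux_has_real_derivative[OF p_nonzero relative_densities_pos(1)
      relative_densities_derivatives(1,2) U_has_real_derivative dU_has_real_derivative, of d1 y]
    entropy_flux_has_real_derivative[OF p_nonzero relative_densities_pos(2)
      relative_densities_derivatives(3,4) U_has_real_derivative dU_has_real_derivative, of d2 y]
  show ?thesis
    using DERIV_add[OF flux] unfolding relative_densities_derivatives(5-8)
      profile_equation_u profile_equation_v
    by (simp add: algebra_simps)
qed

lemma entropy_production_le:
  "deriv (\<lambda>s. Defs.entropy_density p U V (u s) (v s) y) t
     \<le> - Defs.entropy_density p U V (u t) (v t) y / 2
       + reaction_entropy_production \<alpha> k p (exp t) (\<Lambda> y) (U y) (u t y) (v t y)
       + deriv (\<lambda>y. entropy_flux p d1 U \<rho> y + entropy_flux p d2 U \<zeta> y) y"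
proof -
  define S where "S = exp t * \<alpha> * k * (v t y powr \<alpha> - u t y powr \<alpha>)"
  define L where "L = \<alpha> * \<Lambda> y"
  define X\<rho> where "X\<rho> = dFp p (\<rho> y) * (d1 * dyy u t y + y / 2 * dy u t y)"
  define X\<zeta> where "X\<zeta> = dFp p (\<zeta> y) * (d2 * dyy v t y + y / 2 * dy v t y)"
  define D\<rho> where "D\<rho> = d1 * U y * ddFp p (\<rho> y) * (deriv \<rho> y)\<^sup>2"
  define D\<zeta> where "D\<zeta> = d2 * U y * ddFp p (\<zeta> y) * (deriv \<zeta> y)\<^sup>2"
  define H\<rho> where "H\<rho> = \<rho> y * dFp p (\<rho> y) - Fp p (\<rho> y)"
  define H\<zeta> where "H\<zeta> = \<zeta> y * dFp p (\<zeta> y) - Fp p (\<zeta> y)"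
  have "classical u" "classical v" using solution unfolding scaled_solution_def by blast+
  then have "deriv (\<lambda>s. Defs.entropy_density p U V (u s) (v s) y) t
      = dFp p (\<rho> y) * (d1 * dyy u t y + y / 2 * dy u t y + S)
        + dFp p (\<zeta> y) * (d2 * dyy v t y + y / 2 * dy v t y - S)"
    using solution t_pos p_nonzero U_pos solution_pos
    unfolding V_eq_U scaled_solution_def classical_def S_def
    by (simp add: entropy_density_time_derivative)
  also have "\<dots> = X\<rho> + X\<zeta> + S * (dFp p (\<rho> y) - dFp p (\<zeta> y))"
    unfolding X\<rho>_def X\<zeta>_def by (simp add: algebra_simps)
  finally have time_derivative: "deriv (\<lambda>s. Defs.entropy_density p U V (u s) (v s) y) t
      = X\<rho> + X\<zeta> + S * (dFp p (\<rho> y) - dFp p (\<zeta> y))" .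
  have flux_derivative: "deriv (\<lambda>y. entropy_flux p d1 U \<rho> y + entropy_flux p d2 U \<zeta> y) y
      = X\<rho> + D\<rho> + U y * Fp p (\<rho> y) / 2 + L * H\<rho> + (X\<zeta> + D\<zeta> + U y * Fp p (\<zeta> y) / 2 - L * H\<zeta>)"
    unfolding X\<rho>_def X\<zeta>_def D\<rho>_def D\<zeta>_def H\<rho>_def H\<zeta>_def L_def
    by (rule DERIV_imp_deriv[OF total_flux_has_real_derivative])
  have legendre: "H\<rho> = (\<rho> y powr p - 1) / p" "H\<zeta> = (\<zeta> y powr p - 1) / p"
    unfolding H\<rho>_def H\<zeta>_def
    by (rule Fp_legendre[OF p_nonzero relative_densities_pos(1)],
        rule Fp_legendre[OF p_nonzero relative_densities_pos(2)])
  have reaction: "reaction_entropy_production \<alpha> k p (exp t) (\<Lambda> y) (U y) (u t y) (v t y)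
      = L * H\<zeta> - L * H\<rho> + S * (dFp p (\<rho> y) - dFp p (\<zeta> y))"
    unfolding legendre by (simp add: reaction_entropy_production_def L_def S_def diff_divide_distrib algebra_simps)
  have "Defs.entropy_density p U V (u t) (v t) y = U y * Fp p (\<rho> y) + U y * Fp p (\<zeta> y)"
    by (simp add: Defs.entropy_density_def V_eq_U)
  moreover have "0 \<le> D\<rho>" "0 \<le> D\<zeta>"
    using d1_pos d2_pos U_pos[of y] by (simp_all add: D\<rho>_def D\<zeta>_def ddFp_nonneg)
  ultimately show ?thesis
    unfolding time_derivative flux_derivative reaction by linarith
qed

lemma total_flux_tendsto_zero:
  assumes "F = at_top \<or> F = at_bot"
  shows "((\<lambda>y. entropy_flux p d1 U \<rho> y + entropy_flux p d2 U \<zeta> y) \<longlongrightarrow> 0) F"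
proof -
  obtain C where C: "\<And>y. U y \<le> C" using profile_bounds by blast
  define M where "M = max C \<bar>deriv U 0\<bar>"
  have U_bound: "\<bar>U y\<bar> \<le> M" "\<bar>deriv U y\<bar> \<le> M" for y
    using C[of y] U_pos[of y] dU_bounded[of y] by (auto simp: M_def)
  have "dy (\<lambda>s z. u s z / U z) t = deriv \<rho>" "dy (\<lambda>s z. v s z / V z) t = deriv \<zeta>"
    by (simp_all add: dy_def[abs_def] V_eq_U)
  then have "rapid_decay (\<lambda>y. \<rho> y - 1)" "rapid_decay (\<lambda>y. \<zeta> y - 1)"
    "rapid_decay (deriv \<rho>)" "rapid_decay (deriv \<zeta>)"
    using solution t_pos unfolding scaled_solution_def V_eq_U by auto
  note decay = this[THEN rapid_decay_tendsto(1)] this[THEN rapid_decay_tendsto(2)]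
    this[THEN rapid_decay_tendsto(3)] this[THEN rapid_decay_tendsto(4)]
  have "(entropy_flux p d1 U \<rho> \<longlongrightarrow> 0) F" "(entropy_flux p d2 U \<zeta> \<longlongrightarrow> 0) F"
    using assms decay by (auto intro!: entropy_flux_tendsto_zero[OF p_nonzero _ _ _ U_bound])
  then show ?thesis using tendsto_add by fastforce
qed

lemma entropy_derivative_le:
  assumes "integrable lborel B"
    and "\<And>y. reaction_entropy_production \<alpha> k p (exp t) (\<Lambda> y) (U y) (u t y) (v t y) \<le> B y"
  shows "deriv (\<lambda>s. rel_entropy p U V (u s) (v s)) t
      \<le> - (1/2) * rel_entropy p U V (u t) (v t) + (LINT y|lborel. B y)"
proof -
  define I where "I y = deriv (\<lambda>s. Defs.entropy_density p U V (u s) (v s) y) t" for y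
  define G where "G y = entropy_flux p d1 U \<rho> y + entropy_flux p d2 U \<zeta> y" for y
  have "integrable lborel I" "integrable lborel (Defs.entropy_density p U V (u t) (v t))"
    and derivative: "deriv (\<lambda>s. rel_entropy p U V (u s) (v s)) t = (LINT y|lborel. I y)"
    using solution t_pos unfolding scaled_solution_def I_def by (auto intro: DERIV_imp_deriv)
  moreover have "(G has_real_derivative deriv G y) (at y)" for y
    using DERIV_imp_deriv[OF total_flux_has_real_derivative] total_flux_has_real_derivative
    unfolding G_def[abs_def] by simp
  moreover have "I y \<le> (- (1/2) * Defs.entropy_density p U V (u t) (v t) y + B y) + deriv G y" for y
    using entropy_production_le[of y] assms(2)[of y] unfolding I_def G_def[abs_def] by simp
  moreover have "(G \<longlongrightarrow> 0) at_top" "(G \<longlongrightarrow> 0) at_bot"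
    using total_flux_tendsto_zero unfolding G_def[abs_def] by auto
  ultimately have "(LINT y|lborel. I y)
      \<le> (LINT y|lborel. - (1/2) * Defs.entropy_density p U V (u t) (v t) y + B y)"
    using assms(1) by (intro integral_le_of_le_add_derivative[where G = G]) auto
  also have "\<dots> = - (1/2) * (LINT y|lborel. Defs.entropy_density p U V (u t) (v t) y)
      + (LINT y|lborel. B y)"
    using \<open>integrable lborel (Defs.entropy_density p U V (u t) (v t))\<close> assms(1) by simp
  also have "(LINT y|lborel. Defs.entropy_density p U V (u t) (v t) y) = rel_entropy p U V (u t) (v t)"
    by (simp add: rel_entropy_def Defs.entropy_density_def)
  finally show ?thesis unfolding derivative .
qed

end

lemma entropy_decay_order_alpha_minus_one:
  assumes "\<alpha> \<noteq> 1" "0 < k" "scaled_solution d1 d2 k \<alpha> \<alpha> Am Ap U V (\<alpha> - 1) u v" "0 < \<tau>"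
  shows "deriv (\<lambda>t. rel_entropy (\<alpha> - 1) U V (u t) (v t)) \<tau>
      \<le> - (1/2) * rel_entropy (\<alpha> - 1) U V (u \<tau>) (v \<tau>)
        + exp (-\<tau>) * (LINT y|lborel. \<Lambda> y ^ 2 / (4 * k * U y powr \<alpha>))"
proof -
  have "integrable lborel (\<lambda>y. exp (-\<tau>) / (4 * k) * (\<Lambda> y ^ 2 / U y powr \<alpha>))"
    using \<alpha>_pos by (intro integrable_mult_right integrable_multiplier_square) simp
  moreover have "exp (-\<tau>) / (4 * k) * (\<Lambda> y ^ 2 / U y powr \<alpha>)
      = exp (-\<tau>) * (\<Lambda> y ^ 2 / (4 * k * U y powr \<alpha>))" for y
    by simp
  ultimately have "integrable lborel (\<lambda>y. exp (-\<tau>) * (\<Lambda> y ^ 2 / (4 * k * U y powr \<alpha>)))"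
    by simp
  moreover have "reaction_entropy_production \<alpha> k (\<alpha> - 1) (exp \<tau>) (\<Lambda> y) (U y) (u \<tau> y) (v \<tau> y)
      \<le> exp (-\<tau>) * (\<Lambda> y ^ 2 / (4 * k * U y powr \<alpha>))" for y
  proof -
    have "reaction_entropy_production \<alpha> k (\<alpha> - 1) (exp \<tau>) (\<Lambda> y) (U y) (u \<tau> y) (v \<tau> y)
        \<le> \<Lambda> y ^ 2 / (4 * k * U y powr \<alpha>) / exp \<tau>"
      using assms U_pos[of y] solution_pos[OF assms(3) _ assms(4)] \<alpha>_nonzero
      by (intro reaction_bound_powr) auto
    also have "\<dots> = exp (-\<tau>) * (\<Lambda> y ^ 2 / (4 * k * U y powr \<alpha>))"
      by (simp add: exp_minus field_simps)
    finally show ?thesis .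
  qed
  ultimately have "deriv (\<lambda>t. rel_entropy (\<alpha> - 1) U V (u t) (v t)) \<tau>
      \<le> - (1/2) * rel_entropy (\<alpha> - 1) U V (u \<tau>) (v \<tau>)
        + (LINT y|lborel. exp (-\<tau>) * (\<Lambda> y ^ 2 / (4 * k * U y powr \<alpha>)))"
    using assms(1) by (intro entropy_derivative_le[OF assms(3) _ assms(4)]) auto
  then show ?thesis by (simp only: integral_mult_right_zero)
qed

lemma multiplier_ratio_sq_le_Sup:
  "(\<Lambda> y / U y)\<^sup>2 \<le> (SUP y. \<bar>\<Lambda> y / U y\<bar>)\<^sup>2"
proof -
  obtain c where c: "0 < c" "\<And>y. c \<le> U y" using profile_bounds by blast
  obtain M where M: "\<And>y. \<bar>\<Lambda> y\<bar> \<le> M" using multiplier_bounded by blast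
  have "\<bar>\<Lambda> y / U y\<bar> \<le> M / c" for y
    using M[of y] c U_pos[of y] abs_ge_zero[of "\<Lambda> y"]
    by (simp add: abs_div) (rule frac_le, auto)
  then have "bdd_above (range (\<lambda>y. \<bar>\<Lambda> y / U y\<bar>))" by (intro bdd_aboveI2)
  then have "\<bar>\<Lambda> y / U y\<bar> \<le> (SUP y. \<bar>\<Lambda> y / U y\<bar>)" by (rule cSUP_upper[rotated]) simp
  then have "\<bar>\<Lambda> y / U y\<bar>\<^sup>2 \<le> (SUP y. \<bar>\<Lambda> y / U y\<bar>)\<^sup>2" by (rule power_mono) simp
  then show ?thesis by (simp only: power2_abs)
qed

lemma reaction_bound_order_half:
  assumes "0 < k" "0 < \<tau>" "0 < u" "0 < v"
  shows "reaction_entropy_production 1 k (1/2) (exp \<tau>) (\<Lambda> y) (U y) u v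
      \<le> (SUP y. \<bar>\<Lambda> y / U y\<bar>)\<^sup>2 / (k * sqrt 8) * (U y * Fp (1/2) (u / U y) + U y * Fp (1/2) (v / U y))
        + exp (-\<tau>) * ((11 + sqrt 2) / (14 * k) * (\<Lambda> y ^ 2 / U y))"
proof -
  have "sqrt 8 = 2 * sqrt (2::real)"
    using real_sqrt_mult[of 4 2] by simp
  then have "(\<Lambda> y / U y)\<^sup>2 / (2 * sqrt 2 * k) \<le> (SUP y. \<bar>\<Lambda> y / U y\<bar>)\<^sup>2 / (k * sqrt 8)"
    using assms(1) multiplier_ratio_sq_le_Sup[of y]
    by (simp add: divide_right_mono mult.commute mult.left_commute)
  then have "reaction_entropy_production 1 k (1/2) (exp \<tau>) (\<Lambda> y) (U y) u v
      \<le> (SUP y. \<bar>\<Lambda> y / U y\<bar>)\<^sup>2 / (k * sqrt 8) * (U y * Fp (1/2) (u / U y) + U y * Fp (1/2) (v / U y))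
        + (11 + sqrt 2) / (14 * k) * (\<Lambda> y ^ 2 / U y) / exp \<tau>"
    using assms U_pos[of y] by (intro reaction_bound_sqrt) auto
  also have "(11 + sqrt 2) / (14 * k) * (\<Lambda> y ^ 2 / U y) / exp \<tau>
      = exp (-\<tau>) * ((11 + sqrt 2) / (14 * k) * (\<Lambda> y ^ 2 / U y))"
    by (simp add: exp_minus field_simps)
  finally show ?thesis .
qed

lemma entropy_decay_order_half:
  assumes "\<alpha> = 1" "0 < k" "scaled_solution d1 d2 k \<alpha> \<alpha> Am Ap U V (1/2) u v" "0 < \<tau>"
  shows "deriv (\<lambda>t. rel_entropy (1/2) U V (u t) (v t)) \<tau>
      \<le> - (1/2 - (SUP y. \<bar>\<Lambda> y / U y\<bar>)\<^sup>2 / (k * sqrt 8)) * rel_entropy (1/2) U V (u \<tau>) (v \<tau>)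
        + exp (-\<tau>) * (LINT y|lborel. (11 + sqrt 2) / (14 * k) * (\<Lambda> y ^ 2 / U y))"
proof -
  define \<mu> where "\<mu> = (SUP y. \<bar>\<Lambda> y / U y\<bar>)\<^sup>2 / (k * sqrt 8)"
  define B where "B y = \<mu> * Defs.entropy_density (1/2) U V (u \<tau>) (v \<tau>) y
    + exp (-\<tau>) * ((11 + sqrt 2) / (14 * k) * (\<Lambda> y ^ 2 / U y))" for y
  have entropy_integrable: "integrable lborel (Defs.entropy_density (1/2) U V (u \<tau>) (v \<tau>))"
    using assms(3,4) unfolding scaled_solution_def by auto
  have "integrable lborel (\<lambda>y. \<Lambda> y ^ 2 / U y)"
    using integrable_multiplier_square[of 1] U_pos by (simp add: less_imp_le)
  then have source_integrable: "integrable lborel (\<lambda>y. (11 + sqrt 2) / (14 * k) * (\<Lambda> y ^ 2 / U y))"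
    by (rule integrable_mult_right)
  have "integrable lborel B"
    unfolding B_def
    by (intro Bochner_Integration.integrable_add integrable_mult_right[OF entropy_integrable]
        integrable_mult_right[OF source_integrable])
  moreover have "reaction_entropy_production \<alpha> k (1/2) (exp \<tau>) (\<Lambda> y) (U y) (u \<tau> y) (v \<tau> y) \<le> B y" for y
    using reaction_bound_order_half[of k \<tau> "u \<tau> y" "v \<tau> y" y] solution_pos[OF assms(3) _ assms(4)] assms
    by (simp add: B_def \<mu>_def Defs.entropy_density_def V_eq_U)
  ultimately have "deriv (\<lambda>t. rel_entropy (1/2) U V (u t) (v t)) \<tau>
      \<le> - (1/2) * rel_entropy (1/2) U V (u \<tau>) (v \<tau>) + (LINT y|lborel. B y)"
    using assms(1) by (intro entropy_derivative_le[OF assms(3) _ assms(4)]) auto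
  also have "(LINT y|lborel. B y) = \<mu> * (LINT y|lborel. Defs.entropy_density (1/2) U V (u \<tau>) (v \<tau>) y)
      + exp (-\<tau>) * (LINT y|lborel. (11 + sqrt 2) / (14 * k) * (\<Lambda> y ^ 2 / U y))"
    unfolding B_def
    by (simp only: Bochner_Integration.integral_add[OF integrable_mult_right[OF entropy_integrable]
        integrable_mult_right[OF source_integrable]] integral_mult_right_zero)
  also have "(LINT y|lborel. Defs.entropy_density (1/2) U V (u \<tau>) (v \<tau>) y) = rel_entropy (1/2) U V (u \<tau>) (v \<tau>)"
    by (simp add: rel_entropy_def Defs.entropy_density_def)
  finally show ?thesis unfolding \<mu>_def by (simp add: algebra_simps)
qed

end

theorem mainTheorem14:
  fixes d1 d2 k \<alpha> \<beta> Am Ap :: real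
    and U V \<Lambda> :: "real \<Rightarrow> real"
    and u v :: "real \<Rightarrow> real \<Rightarrow> real"
  assumes "0 < d1" "0 < d2" "0 < k" "1 \<le> \<alpha>" "1 \<le> \<beta>" "0 < Am" "0 < Ap"
    and "\<alpha> = \<beta>"
    and "similarity_profile d1 d2 \<alpha> \<beta> Am Ap U V \<Lambda>"
  shows
    "(2 \<le> \<alpha> \<longrightarrow> scaled_solution d1 d2 k \<alpha> \<beta> Am Ap U V (\<alpha> - 1) u v \<longrightarrow>
        (\<forall>\<tau>>0. deriv (\<lambda>t. rel_entropy (\<alpha> - 1) U V (u t) (v t)) \<tau>
           \<le> - (1/2) * rel_entropy (\<alpha> - 1) U V (u \<tau>) (v \<tau>)
             + exp (-\<tau>) * (LINT y|lborel. \<Lambda> y ^ 2 / (4 * k * U y powr \<alpha>)))) \<and>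
     (\<alpha> = 1 \<longrightarrow> scaled_solution d1 d2 k \<alpha> \<beta> Am Ap U V (1/2) u v \<longrightarrow>
        (\<forall>\<tau>>0. deriv (\<lambda>t. rel_entropy (1/2) U V (u t) (v t)) \<tau>
           \<le> - (1/2 - (SUP y. \<bar>\<Lambda> y / U y\<bar>) ^ 2 / (k * sqrt 8))
               * rel_entropy (1/2) U V (u \<tau>) (v \<tau>)
             + exp (-\<tau>) * (LINT y|lborel. (11 + sqrt 2) / (14 * k) * (\<Lambda> y ^ 2 / U y))))"
proof -
  have \<beta>: "\<beta> = \<alpha>" using assms(8) by simp
  interpret equal_coefficient_profile d1 d2 \<alpha> Am Ap U V \<Lambda>
    using assms(1,2,4,9) unfolding \<beta> by unfold_locales auto
  show ?thesis
    unfolding \<beta> using entropy_decay_order_alpha_minus_one entropy_decay_order_half assms(3) by auto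
qed

end
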